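(* Let $P$ be a finite point set in general position and let $p\in P$ have degree exactly one in $G_\bigtriangledown(P)$. Suppose there are distinct $i,j\in\{1,2,3\}$ with $V_i(p)\neq\emptyset$ and $V_j(p)\neq\emptyset$, and let $k$ be the element of $\{1,2,3\}\setminus\{i,j\}$. Then $\overline{V}_k(p)\neq\emptyset$.
   Context: A finite point set $P$ in the plane is in general position if no line through two points of $P$ makes an angle of $0^\circ$, $60^\circ$ or $120^\circ$ with the horizontal. A down-triangle is an equilateral triangle with one side parallel to the $x$-axis and the corner opposite to this side below that side. $G_\bigtriangledown(P)$ is the graph with vertex set $P$ in which $p,q$ are adjacent iff some (closed) down-triangle contains $p$ and $q$ and no other point of $P$. For a point $p$, let $A_i(p)$ ($i=1,\dots,6$) be the closed cone with apex $p$ between the rays from $p$ at angles $(i-1)\pi/3$ and $i\pi/3$ measured counter-clockwise from the positive $x$-axis; $C_1(p)=A_1(p)$, $C_2(p)=A_3(p)$, $C_3(p)=A_5(p)$ and $\overline{C}_1(p)=A_4(p)$, $\overline{C}_2(p)=A_6(p)$, $\overline{C}_3(p)=A_2(p)$. For $i\in\{1,2,3\}$, $V_i(p)=\{p'\in P\setminus\{p\}: p'\in C_i(p)\}$ and $\overline{V}_i(p)=\{p'\in P\setminus\{p\}: p'\in\overline{C}_i(p)\}$. *)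

theory Defs
  imports "HOL-Analysis.Analysis"
begin

type_synonym point = "real \<times> real"

text \<open>General position: no line through two distinct points of P makes an angle of
0, 60 or 120 degrees with the horizontal.\<close>
definition general_position :: "point set \<Rightarrow> bool" where
  "general_position P \<longleftrightarrow>
     (\<forall>p\<in>P. \<forall>q\<in>P. p \<noteq> q \<longrightarrow>
        snd q - snd p \<noteq> 0 \<and>
        snd q - snd p \<noteq> sqrt 3 * (fst q - fst p) \<and>
        snd q - snd p \<noteq> - sqrt 3 * (fst q - fst p))"

definition down_triangle :: "point set \<Rightarrow> bool" where
  "down_triangle T \<longleftrightarrow>
     (\<exists>a b s. s > 0 \<and>
        T = convex hull {(a, b), (a + s, b), (a + s / 2, b - s * sqrt 3 / 2)})"

definition tri_adj :: "point set \<Rightarrow> point \<Rightarrow> point \<Rightarrow> bool" where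
  "tri_adj P p q \<longleftrightarrow> p \<in> P \<and> q \<in> P \<and> p \<noteq> q \<and>
     (\<exists>T. down_triangle T \<and> T \<inter> P = {p, q})"

definition tri_degree :: "point set \<Rightarrow> point \<Rightarrow> nat" where
  "tri_degree P p = card {q. tri_adj P p q}"

definition cone_A :: "nat \<Rightarrow> point \<Rightarrow> point set" where
  "cone_A i p = {(fst p + r * cos \<theta>, snd p + r * sin \<theta>) | r \<theta>.
       r \<ge> 0 \<and> (real i - 1) * pi / 3 \<le> \<theta> \<and> \<theta> \<le> real i * pi / 3}"

definition cone_C :: "nat \<Rightarrow> point \<Rightarrow> point set" where
  "cone_C i p = cone_A (2 * i - 1) p"

definition cone_Cbar :: "nat \<Rightarrow> point \<Rightarrow> point set" where
  "cone_Cbar i p = (if i = 3 then cone_A 2 p else cone_A (2 * i + 2) p)"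
  (* Cbar1 = A4, Cbar2 = A6, Cbar3 = A2 *)

definition V :: "point set \<Rightarrow> nat \<Rightarrow> point \<Rightarrow> point set" where
  "V P i p = {p' \<in> P - {p}. p' \<in> cone_C i p}"

definition Vbar :: "point set \<Rightarrow> nat \<Rightarrow> point \<Rightarrow> point set" where
  "Vbar P i p = {p' \<in> P - {p}. p' \<in> cone_Cbar i p}"

end

theory Submission imports Defs begin

(* Measure points by three "heights"
     h_1 = -(sqrt 3 x + y),   h_2 = sqrt 3 x - y,   h_3 = 2 y,
   linear functionals with h_1 + h_2 + h_3 = 0, each constant along one side of a down-triangle.
   The combinatorial core: if no point of P is strictly below p in both h_i and h_j, and some
   point is below p in h_j, then the point q below p in h_j with least h_i is a neighbour of p
   (witnessed by the triangle {h_i <= h_i q, h_j <= h_j p, h_k <= max}), and it is above p in h_i.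
   For the theorem, an empty Vbar_k(p) makes that region empty by (4), so V_j(p) and V_i(p)
   yield two neighbours lying on opposite sides of p, hence distinct: degree at least two. *)

definition height :: "nat \<Rightarrow> point \<Rightarrow> real" where
  "height m x = (if m = 1 then - (sqrt 3 * fst x + snd x)
                 else if m = 2 then sqrt 3 * fst x - snd x else 2 * snd x)"

definition index_triple :: "nat \<Rightarrow> nat \<Rightarrow> nat \<Rightarrow> bool" where
  "index_triple i j k \<longleftrightarrow>
     i \<in> {1,2,3} \<and> j \<in> {1,2,3} \<and> k \<in> {1,2,3} \<and> i \<noteq> j \<and> i \<noteq> k \<and> j \<noteq> k"

lemma height_sum: "index_triple i j k \<Longrightarrow> height i x + height j x + height k x = 0"
  unfolding index_triple_def height_def by auto

lemma general_position_height:
  assumes "general_position P" "p \<in> P" "q \<in> P" "p \<noteq> q" "m \<in> {1,2,3}"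
  shows "height m q \<noteq> height m p"
proof -
  have "snd q - snd p \<noteq> 0" "snd q - snd p \<noteq> sqrt 3 * (fst q - fst p)"
       "snd q - snd p \<noteq> - (sqrt 3 * (fst q - fst p))"
    using assms(1-4) unfolding general_position_def by auto
  then show ?thesis using assms(5) unfolding height_def by (auto simp: algebra_simps)
qed

section \<open>Down-triangles as intersections of three height half-planes\<close>

lemma down_triangle_hull_eq:
  assumes s: "s > 0"
  shows "convex hull {(a, b), (a + s, b), (a + s / 2, b - s * sqrt 3 / 2)} =
    {x. height 3 x \<le> 2 * b \<and> height 1 x \<le> - (sqrt 3 * a + b) \<and>
        height 2 x \<le> sqrt 3 * (a + s) - b}"
    (is "convex hull {?A, ?B, ?C} = ?H")
proof (rule set_eqI, rule iffI)
  fix x assume "x \<in> convex hull {?A, ?B, ?C}"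
  then obtain u v w where uvw: "0 \<le> u" "0 \<le> v" "0 \<le> w" "u + v + w = 1"
    and x: "x = u *\<^sub>R ?A + v *\<^sub>R ?B + w *\<^sub>R ?C"
    unfolding convex_hull_3 by blast
  have u: "u = 1 - v - w" using uvw(4) by simp
  have "fst x = a + v * s + w * s / 2" "snd x = b - w * s * sqrt 3 / 2"
    using x unfolding u by (auto simp: algebra_simps)
  then have "height 3 x = 2 * b - sqrt 3 * (s * w)"
    "height 1 x = - (sqrt 3 * a + b) - sqrt 3 * (s * v)"
    "height 2 x = sqrt 3 * (a + s) - b - sqrt 3 * (s * u)"
    unfolding height_def u by (simp_all add: algebra_simps)
  moreover have "0 \<le> sqrt 3 * (s * w)" "0 \<le> sqrt 3 * (s * v)" "0 \<le> sqrt 3 * (s * u)"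
    using uvw s by auto
  ultimately show "x \<in> ?H" by simp
next
  fix x assume "x \<in> ?H"
  text \<open>The barycentric coordinates are the normalised slacks of the three inequalities.\<close>
  define S where "S = sqrt 3 * s"
  have S: "S > 0" using s by (simp add: S_def)
  define u where "u = (sqrt 3 * (a + s) - b - height 2 x) / S"
  define v where "v = (- (sqrt 3 * a + b) - height 1 x) / S"
  define w where "w = (2 * b - height 3 x) / S"
  have nonneg: "0 \<le> u" "0 \<le> v" "0 \<le> w"
    using \<open>x \<in> ?H\<close> S unfolding u_def v_def w_def by auto
  have "(sqrt 3 * (a + s) - b - height 2 x) + (- (sqrt 3 * a + b) - height 1 x)
        + (2 * b - height 3 x) = S"
    unfolding height_def S_def by (simp add: algebra_simps)
  then have "u + v + w = 1"
    using S unfolding u_def v_def w_def by (simp add: add_divide_distrib[symmetric])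
  moreover have "x = u *\<^sub>R ?A + v *\<^sub>R ?B + w *\<^sub>R ?C"
    using S s unfolding u_def v_def w_def S_def height_def
    by (simp add: prod_eq_iff field_simps)
  ultimately show "x \<in> convex hull {?A, ?B, ?C}"
    unfolding convex_hull_3 using nonneg by blast
qed

lemma down_triangle_height_bounds:
  assumes "index_triple i j k" and "ci + cj + ck > 0"
  shows "down_triangle {x. height i x \<le> ci \<and> height j x \<le> cj \<and> height k x \<le> ck}"
proof -
  define c where "c m = (if m = i then ci else if m = j then cj else ck)" for m
  have eq: "{x. height i x \<le> ci \<and> height j x \<le> cj \<and> height k x \<le> ck} =
            {x. height 3 x \<le> c 3 \<and> height 1 x \<le> c 1 \<and> height 2 x \<le> c 2}"
    using assms(1) unfolding c_def index_triple_def by auto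
  have sum: "c 1 + c 2 + c 3 > 0" using assms unfolding c_def index_triple_def by auto
  define b where "b = c 3 / 2"
  define a where "a = - (c 1 + b) / sqrt 3"
  define s where "s = (c 1 + c 2 + c 3) / sqrt 3"
  have s: "s > 0" using sum unfolding s_def by simp
  have "sqrt 3 * a = - (c 1 + b)" "sqrt 3 * s = c 1 + c 2 + c 3"
    unfolding a_def s_def by simp_all
  then have "2 * b = c 3" "- (sqrt 3 * a + b) = c 1" "sqrt 3 * (a + s) - b = c 2"
    unfolding b_def by (simp_all add: distrib_left)
  then have "convex hull {(a, b), (a + s, b), (a + s / 2, b - s * sqrt 3 / 2)} =
             {x. height 3 x \<le> c 3 \<and> height 1 x \<le> c 1 \<and> height 2 x \<le> c 2}"
    using down_triangle_hull_eq[OF s, of a b] by simp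
  then show ?thesis unfolding eq down_triangle_def using s by blast
qed

section \<open>Heights and the six cones\<close>

lemma sin_nonneg_third_half_turn: "2 * pi \<le> x \<Longrightarrow> x \<le> 3 * pi \<Longrightarrow> 0 \<le> sin x"
  using sin_ge_zero[of "x - 2 * pi"] sin_periodic[of "x - 2 * pi"] by simp

lemma sin_nonpos_below_zero: "- pi \<le> x \<Longrightarrow> x \<le> 0 \<Longrightarrow> sin x \<le> 0"
  using sin_ge_zero[of "- x"] by simp

lemma sin_nonpos_second_half_turn: "pi \<le> x \<Longrightarrow> x \<le> 2 * pi \<Longrightarrow> sin x \<le> 0"
  using sin_nonpos_below_zero[of "x - 2 * pi"] sin_periodic[of "x - 2 * pi"] by simp

lemma sin_signs_sixth_turn:
  fixes r t :: real and m :: nat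
  assumes r: "r \<ge> 0" and t: "(real m - 1) * pi / 3 \<le> t" "t \<le> real m * pi / 3"
  shows "(m = 1 \<longrightarrow> 0 \<le> r * sin t \<and> 0 \<le> r * sin (t + pi/3) \<and> r * sin (t - pi/3) \<le> 0) \<and>
         (m = 2 \<longrightarrow> 0 \<le> r * sin t \<and> 0 \<le> r * sin (t + pi/3) \<and> 0 \<le> r * sin (t - pi/3)) \<and>
         (m = 3 \<longrightarrow> 0 \<le> r * sin t \<and> r * sin (t + pi/3) \<le> 0 \<and> 0 \<le> r * sin (t - pi/3)) \<and>
         (m = 4 \<longrightarrow> r * sin t \<le> 0 \<and> r * sin (t + pi/3) \<le> 0 \<and> 0 \<le> r * sin (t - pi/3)) \<and>
         (m = 5 \<longrightarrow> r * sin t \<le> 0 \<and> r * sin (t + pi/3) \<le> 0 \<and> r * sin (t - pi/3) \<le> 0) \<and>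
         (m = 6 \<longrightarrow> r * sin t \<le> 0 \<and> 0 \<le> r * sin (t + pi/3) \<and> r * sin (t - pi/3) \<le> 0)"
proof -
  have nonneg: "0 \<le> r * sin x" if "0 \<le> sin x" for x using r that by simp
  have nonpos: "r * sin x \<le> 0" if "sin x \<le> 0" for x using r that by (simp add: mult_nonneg_nonpos)
  have sin_nonneg: "0 \<le> sin x" if "0 \<le> x \<and> x \<le> pi \<or> 2 * pi \<le> x \<and> x \<le> 3 * pi" for x
    using that sin_ge_zero sin_nonneg_third_half_turn by blast
  have sin_nonpos: "sin x \<le> 0" if "- pi \<le> x \<and> x \<le> 0 \<or> pi \<le> x \<and> x \<le> 2 * pi" for x
    using that sin_nonpos_below_zero sin_nonpos_second_half_turn by blast
  show ?thesis using t
    by (intro conjI impI nonneg nonpos sin_nonneg sin_nonpos; simp; linarith)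
qed

text \<open>Sign pattern of the height differences on each cone A_m(p): in polar coordinates around p
  they are multiples of sin t, sin (t + pi/3) and sin (t - pi/3).\<close>
lemma cone_A_height_signs:
  assumes "q \<in> cone_A m p"
  defines "d l \<equiv> height l q - height l p"
  shows "(m = 1 \<longrightarrow> d 1 \<le> 0 \<and> d 2 \<ge> 0 \<and> d 3 \<ge> 0) \<and>
         (m = 2 \<longrightarrow> d 1 \<le> 0 \<and> d 2 \<le> 0 \<and> d 3 \<ge> 0) \<and>
         (m = 3 \<longrightarrow> d 1 \<ge> 0 \<and> d 2 \<le> 0 \<and> d 3 \<ge> 0) \<and>
         (m = 4 \<longrightarrow> d 1 \<ge> 0 \<and> d 2 \<le> 0 \<and> d 3 \<le> 0) \<and>
         (m = 5 \<longrightarrow> d 1 \<ge> 0 \<and> d 2 \<ge> 0 \<and> d 3 \<le> 0) \<and>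
         (m = 6 \<longrightarrow> d 1 \<le> 0 \<and> d 2 \<ge> 0 \<and> d 3 \<le> 0)"
proof -
  obtain r t where q: "q = (fst p + r * cos t, snd p + r * sin t)" and r: "r \<ge> 0"
    and t: "(real m - 1) * pi / 3 \<le> t" "t \<le> real m * pi / 3"
    using assms(1) unfolding cone_A_def by blast
  have "d 1 = - 2 * (r * sin (t + pi/3))" "d 2 = - 2 * (r * sin (t - pi/3))"
    "d 3 = 2 * (r * sin t)"
    unfolding d_def height_def q by (simp_all add: sin_add sin_diff sin_60 cos_60 algebra_simps)
  then show ?thesis using sin_signs_sixth_turn[OF r t] by auto
qed

lemma cone_A_cover:
  assumes "q \<noteq> p"
  shows "\<exists>m\<in>{1,2,3,4,5,6::nat}. q \<in> cone_A m p"
proof -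
  define dx where "dx = fst q - fst p"
  define dy where "dy = snd q - snd p"
  define r where "r = sqrt (dx^2 + dy^2)"
  have "dx \<noteq> 0 \<or> dy \<noteq> 0" using assms unfolding dx_def dy_def by (auto simp: prod_eq_iff)
  then have pos: "dx^2 + dy^2 > 0" by (simp add: sum_power2_gt_zero_iff)
  then have r: "r > 0" and r2: "r^2 = dx^2 + dy^2" unfolding r_def by simp_all
  have "(dx/r)^2 + (dy/r)^2 = (dx^2 + dy^2) / r^2" by (simp add: power_divide add_divide_distrib)
  then have "(dx/r)^2 + (dy/r)^2 = 1" using r2 pos r by (simp add: sum_power2_gt_zero_iff)
  then obtain t where t: "0 \<le> t" "t \<le> 2 * pi" "dx/r = cos t" "dy/r = sin t"
    using sincos_total_2pi_le by blast
  have q: "q = (fst p + r * cos t, snd p + r * sin t)"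
    using t(3,4) r unfolding dx_def dy_def by (auto simp: prod_eq_iff field_simps)
  define m :: nat where "m = nat \<lceil>3 * t / pi\<rceil>"
  text \<open>t lies in the m-th sixth of the turn (t = 0 is covered by the first sixth).\<close>
  define m' where "m' = max 1 m"
  have "3 * t / pi \<le> 6" using t(2) by (simp add: divide_simps)
  then have "1 \<le> m'" "m' \<le> 6" unfolding m'_def m_def by (auto simp: ceiling_le_iff nat_le_iff)
  then have m': "m' \<in> {1,2,3,4,5,6}" by (auto simp: eval_nat_numeral le_Suc_eq)
  have t_m': "(real m' - 1) * pi / 3 \<le> t \<and> t \<le> real m' * pi / 3"
  proof -
    have "real m - 1 < 3 * t / pi" "3 * t / pi \<le> real m"
      using t(1) unfolding m_def by (simp_all add: ceiling_correct)
    then have lo: "(real m - 1) * pi / 3 \<le> t" and hi: "t \<le> real m * pi / 3"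
      using pi_gt_zero by (simp_all add: pos_less_divide_eq pos_divide_le_eq mult.commute)
    show ?thesis
    proof (cases "m = 0")
      case True
      then show ?thesis using hi t(1) unfolding m'_def by simp
    next
      case False
      then show ?thesis using lo hi unfolding m'_def by simp
    qed
  qed
  have "q \<in> cone_A m' p"
    unfolding cone_A_def q mem_Collect_eq
    by (intro exI[of _ r] exI[of _ t]) (use r t_m' in simp)
  then show ?thesis using m' by blast
qed

lemma cone_C_height:
  assumes "q \<in> cone_C m p" "m \<in> {1,2,3}"
  shows "height m q \<le> height m p"
  using assms cone_A_height_signs[of q "2 * m - 1" p] unfolding cone_C_def by auto

lemma cone_Cbar_of_heights:
  assumes "q \<noteq> p" "k \<in> {1,2,3}"
    and above: "height k q > height k p"
    and below: "\<And>l. l \<in> {1,2,3} \<Longrightarrow> l \<noteq> k \<Longrightarrow> height l q < height l p"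
  shows "q \<in> cone_Cbar k p"
proof -
  obtain m where m: "m \<in> {1,2,3,4,5,6}" "q \<in> cone_A m p" using cone_A_cover[OF assms(1)] by blast
  note signs = cone_A_height_signs[OF m(2)]
  consider "k = 1" | "k = 2" | "k = 3" using assms(2) by auto
  then show ?thesis
  proof cases
    case 1
    then have "m = 4" using m(1) signs above below[of 2] below[of 3] by auto
    then show ?thesis using m(2) 1 unfolding cone_Cbar_def by simp
  next
    case 2
    then have "m = 6" using m(1) signs above below[of 1] below[of 3] by auto
    then show ?thesis using m(2) 2 unfolding cone_Cbar_def by simp
  next
    case 3
    then have "m = 2" using m(1) signs above below[of 1] below[of 2] by auto
    then show ?thesis using m(2) 3 unfolding cone_Cbar_def by simp
  qed
qed

lemma V_nonempty_below:
  assumes "general_position P" "p \<in> P" "V P m p \<noteq> {}" "m \<in> {1,2,3}"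
  shows "\<exists>x\<in>P. height m x < height m p"
proof -
  obtain x where x: "x \<in> V P m p" using assms(3) by blast
  then have "x \<in> P" "x \<noteq> p" "x \<in> cone_C m p" unfolding V_def by auto
  then have "height m x \<le> height m p" "height m x \<noteq> height m p"
    using cone_C_height assms(1,2,4) general_position_height by auto
  then show ?thesis using \<open>x \<in> P\<close> by force
qed

lemma Vbar_empty_region_empty:
  assumes "Vbar P k p = {}" "index_triple i j k" "x \<in> P"
  shows "\<not> (height i x < height i p \<and> height j x < height j p)"
proof
  assume below: "height i x < height i p \<and> height j x < height j p"
  then have "x \<noteq> p" by auto
  moreover have "height k x > height k p"
    using below height_sum[OF assms(2), of x] height_sum[OF assms(2), of p] by linarith
  ultimately have "x \<in> cone_Cbar k p"
    using below assms(2) by (intro cone_Cbar_of_heights) (auto simp: index_triple_def)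
  then show False using assms(1,3) \<open>x \<noteq> p\<close> unfolding Vbar_def by blast
qed

text \<open>If no point of P is below p in both h_i and h_j, but some point is below p in h_j, then
  p has a neighbour that is below p in h_j and above p in h_i: the point q with least h_i among
  those below p in h_j, which a down-triangle cuts off together with p.\<close>
lemma neighbour_below_in_height:
  assumes fin: "finite P" and gp: "general_position P" and p: "p \<in> P"
    and ijk: "index_triple i j k"
    and empty: "\<And>x. x \<in> P \<Longrightarrow> \<not> (height i x < height i p \<and> height j x < height j p)"
    and below: "\<exists>x\<in>P. height j x < height j p"
  shows "\<exists>q. tri_adj P p q \<and> height j q < height j p \<and> height i q > height i p"
proof -
  have idx: "i \<in> {1,2,3}" "j \<in> {1,2,3}" using ijk unfolding index_triple_def by auto
  define S where "S = {x\<in>P. height j x < height j p}"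
  have "finite S" "S \<noteq> {}" using fin below unfolding S_def by auto
  have S_above: "height i x > height i p" if "x \<in> S" for x
  proof -
    have "x \<in> P" "height j x < height j p" using that unfolding S_def by auto
    moreover have "x \<noteq> p" using calculation by auto
    ultimately show ?thesis using empty general_position_height[OF gp p _ _ idx(1)]
      by (metis linorder_neqE_linordered_idom)
  qed
  obtain q where qS: "q \<in> S" and q_min: "\<And>x. x \<in> S \<Longrightarrow> height i q \<le> height i x"
    using \<open>finite S\<close> \<open>S \<noteq> {}\<close> by (metis (no_types) arg_min_if_finite(1,2) not_le)
  have qP: "q \<in> P" and qj: "height j q < height j p" using qS unfolding S_def by auto
  have qi: "height i q > height i p" using S_above[OF qS] .
  define M where "M = Max (height k ` P)"
  have M: "height k x \<le> M" if "x \<in> P" for x unfolding M_def using fin that by simp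
  define T where "T = {x. height i x \<le> height i q \<and> height j x \<le> height j p \<and> height k x \<le> M}"
  have "height i q + height j p + M > 0"
    using height_sum[OF ijk, of p] M[OF p] qi by linarith
  then have "down_triangle T" unfolding T_def by (rule down_triangle_height_bounds[OF ijk])
  moreover have "T \<inter> P = {p, q}"
  proof
    show "{p, q} \<subseteq> T \<inter> P" using p qP M qi qj unfolding T_def by auto
    show "T \<inter> P \<subseteq> {p, q}"
    proof
      fix x assume x: "x \<in> T \<inter> P"
      show "x \<in> {p, q}"
      proof (cases "x = p")
        case False
        have "height j x \<noteq> height j p"
          using general_position_height[OF gp p _ _ idx(2)] x False by auto
        then have "x \<in> S" using x unfolding T_def S_def by auto
        moreover have "height i x \<le> height i q" using x unfolding T_def by simp
        ultimately have "height i x = height i q" using q_min by (meson antisym)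
        then have "x = q" using general_position_height[OF gp qP _ _ idx(1)] x by blast
        then show ?thesis by simp
      qed simp
    qed
  qed
  moreover have "q \<noteq> p" using qj by auto
  ultimately have "tri_adj P p q" unfolding tri_adj_def using p qP by blast
  then show ?thesis using qi qj by blast
qed

lemma tri_degree_ge_two:
  assumes "finite P" "tri_adj P p q1" "tri_adj P p q2" "q1 \<noteq> q2"
  shows "tri_degree P p \<ge> 2"
proof -
  have "finite {q. tri_adj P p q}"
    using assms(1) by (rule finite_subset[rotated]) (auto simp: tri_adj_def)
  then have "card {q1, q2} \<le> card {q. tri_adj P p q}"
    using assms(2,3) by (intro card_mono) auto
  then show ?thesis using assms(4) unfolding tri_degree_def by simp
qed

theorem mainTheorem5:
  fixes P :: "point set" and p :: point and i j k :: nat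
  assumes "finite P" and "general_position P" and "p \<in> P"
    and "tri_degree P p = 1"
    and "i \<in> {1,2,3}" and "j \<in> {1,2,3}" and "i \<noteq> j"
    and "V P i p \<noteq> {}" and "V P j p \<noteq> {}"
    and "k \<in> {1,2,3}" and "k \<noteq> i" and "k \<noteq> j"
  shows "Vbar P k p \<noteq> {}"
proof
  assume empty: "Vbar P k p = {}"
  have ijk: "index_triple i j k" and jik: "index_triple j i k"
    using assms(5-7,10-12) unfolding index_triple_def by auto
  obtain q1 where q1: "tri_adj P p q1" "height j q1 < height j p" "height i q1 > height i p"
    using neighbour_below_in_height[OF assms(1-3) ijk]
      Vbar_empty_region_empty[OF empty ijk] V_nonempty_below[OF assms(2,3,9,6)] by blast
  obtain q2 where q2: "tri_adj P p q2" "height i q2 < height i p" "height j q2 > height j p"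
    using neighbour_below_in_height[OF assms(1-3) jik]
      Vbar_empty_region_empty[OF empty jik] V_nonempty_below[OF assms(2,3,8,5)] by blast
  have "q1 \<noteq> q2" using q1 q2 by auto
  then have "tri_degree P p \<ge> 2" using tri_degree_ge_two[OF assms(1) q1(1) q2(1)] by simp
  then show False using assms(4) by simp
qed

end
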